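(* Let $k\le l$ be positive integers with $\gcd(k,l)=1$, let $n\ge 1$ and $m\ge 0$ be integers, and write $m=qn+r$ with integers $q\ge 0$, $0\le r<n$. Let $x,y$ be integers satisfying $x\ge rk$, $y\ge rl$ and $qxy+r(xl+yk)\ge klnr$, chosen so that $x+y$ is the smallest possible among all such pairs. If $x+y\le nk$, then there exists $A\in\mathcal D^{k,l}(m,n)$ such that ${\rm tdet}(A)\le nkq+x+y$.
   Context: $\mathcal D^{k,l}(m,n)$ denotes the set of all $nk\times nl$ matrices with nonnegative integer entries all of whose row sums equal $ml$ and all of whose column sums equal $mk$. For an $s\times t$ matrix $A=(a_{ij})$ with $s\le t$, a transversal of $A$ is a set of entries $T=\{a_{1i_1},\dots,a_{si_s}\}$ with $i_1,\dots,i_s\in\{1,\dots,t\}$ pairwise distinct, and $|T|=a_{1i_1}+\cdots+a_{si_s}$; if $s>t$, the transversals of $A$ are those of its transpose. The tropical determinant is ${\rm tdet}(A)=\max_T|T|$ over all transversals $T$ of $A$. *)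

theory Defs
  imports Main
begin

text \<open>An s x t matrix with nonnegative integer entries is represented as a function
  nat => nat => nat; only the entries with row index < s and column index < t matter.\<close>

definition transversal_sums :: "nat \<Rightarrow> nat \<Rightarrow> (nat \<Rightarrow> nat \<Rightarrow> nat) \<Rightarrow> nat set" where
  "transversal_sums s t A =
     (if s \<le> t then {(\<Sum>i<s. A i (f i)) | f. inj_on f {..<s} \<and> f ` {..<s} \<subseteq> {..<t}}
      else {(\<Sum>j<t. A (g j) j) | g. inj_on g {..<t} \<and> g ` {..<t} \<subseteq> {..<s}})"

definition tdet :: "nat \<Rightarrow> nat \<Rightarrow> (nat \<Rightarrow> nat \<Rightarrow> nat) \<Rightarrow> nat" where
  "tdet s t A = Max (transversal_sums s t A)"

definition Dkl :: "nat \<Rightarrow> nat \<Rightarrow> nat \<Rightarrow> nat \<Rightarrow> (nat \<Rightarrow> nat \<Rightarrow> nat) set" where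
  "Dkl k l m n = {A. (\<forall>i j. (i \<ge> n*k \<or> j \<ge> n*l) \<longrightarrow> A i j = 0)
      \<and> (\<forall>i<n*k. (\<Sum>j<n*l. A i j) = m*l)
      \<and> (\<forall>j<n*l. (\<Sum>i<n*k. A i j) = m*k)}"

end

theory Submission
  imports Defs
begin

text \<open>Take \<open>a = x\<close>, \<open>b = y\<close> and build the matrix in blocks. The first \<open>n k - a\<close> rows have the
  entry \<open>q\<close> everywhere plus a surplus of \<open>r l\<close> each, wound cyclically around the last \<open>b\<close>
  columns, so every surplus entry is at most \<open>1\<close>. The last \<open>a\<close> rows complete each column to
  the column sum \<open>m k\<close>: the missing amount of a column is at most \<open>q a + r k \<le> (q + 1) a\<close>, and
  winding these amounts cyclically around the \<open>a\<close> rows gives entries at most \<open>q + 1\<close> and equal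
  row sums. The feasibility inequality for \<open>(x, y)\<close> says exactly that the surplus received
  by a column never exceeds \<open>q a + r k\<close>. Hence every entry is at most \<open>u i + v j\<close>, where \<open>u i\<close>
  is \<open>q\<close> plus one on the last \<open>a\<close> rows and \<open>v j\<close> is one on the last \<open>b\<close> columns, and every
  transversal weighs at most \<open>\<Sum>u + \<Sum>v = n k q + a + b\<close>.\<close>

definition residue_count :: "nat \<Rightarrow> nat \<Rightarrow> nat \<Rightarrow> nat \<Rightarrow> nat" where
  "residue_count lo hi p i = card {t \<in> {lo..<hi}. t mod p = i}"

lemma residue_count_empty: "hi \<le> lo \<Longrightarrow> residue_count lo hi p i = 0"
  by (simp add: residue_count_def)

lemma residue_count_split:
  assumes "lo \<le> mid" "mid \<le> hi"
  shows "residue_count lo hi p i = residue_count lo mid p i + residue_count mid hi p i"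
proof -
  have "{t \<in> {lo..<hi}. t mod p = i} = {t \<in> {lo..<mid}. t mod p = i} \<union> {t \<in> {mid..<hi}. t mod p = i}"
    using assms by auto
  then show ?thesis
    unfolding residue_count_def by (simp add: card_Un_disjoint disjoint_iff)
qed

lemma residue_count_mono: "hi \<le> hi' \<Longrightarrow> residue_count lo hi p i \<le> residue_count lo hi' p i"
  unfolding residue_count_def by (rule card_mono) auto

lemma sum_residue_count:
  assumes "0 < p \<or> hi \<le> lo"
  shows "(\<Sum>i<p. residue_count lo hi p i) = hi - lo"
proof (cases "0 < p")
  case True
  have "(\<lambda>t. t mod p) ` {lo..<hi} \<subseteq> {..<p}" using True by auto
  from sum.group[OF finite_atLeastLessThan finite_lessThan this, of "\<lambda>_. 1::nat"]
  show ?thesis by (simp add: residue_count_def)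
qed (use assms in simp)

lemma residue_count_period_le_1: "residue_count lo (lo + p) p i \<le> 1"
proof -
  have "s = u" if "s \<in> {lo..<lo + p}" "u \<in> {lo..<lo + p}" "s mod p = u mod p" for s u
  proof (rule ccontr)
    assume "s \<noteq> u"
    moreover have "p dvd (max s u - min s u)"
      using that(3) mod_eq_dvd_iff_nat[of s u p] mod_eq_dvd_iff_nat[of u s p] by (auto simp: max_def min_def)
    ultimately show False
      using that(1,2) by (auto dest: dvd_imp_le)
  qed
  then show ?thesis
    unfolding residue_count_def One_nat_def by (subst card_le_Suc0_iff_eq) auto
qed

lemma residue_count_periods_le: "residue_count lo (lo + d * p) p i \<le> d"
proof (induction d)
  case (Suc d)
  have "residue_count lo (lo + Suc d * p) p i
      = residue_count lo (lo + d * p) p i + residue_count (lo + d * p) (lo + Suc d * p) p i"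
    by (rule residue_count_split) simp_all
  moreover have "residue_count (lo + d * p) (lo + Suc d * p) p i \<le> 1"
    using residue_count_period_le_1[of "lo + d * p" p i] by (simp add: algebra_simps)
  ultimately show ?case using Suc by linarith
qed (simp add: residue_count_empty)

lemma residue_count_le: "hi \<le> lo + d * p \<Longrightarrow> residue_count lo hi p i \<le> d"
  using residue_count_mono residue_count_periods_le order_trans by blast

lemma residue_count_periods:
  assumes "i < p"
  shows "residue_count lo (lo + d * p) p i = d"
proof (rule ccontr)
  assume "residue_count lo (lo + d * p) p i \<noteq> d"
  then have "residue_count lo (lo + d * p) p i < d"
    using residue_count_periods_le le_neq_implies_less by blast
  with assms have "(\<Sum>i<p. residue_count lo (lo + d * p) p i) < (\<Sum>i<p. d)"
    by (intro sum_strict_mono_ex1) (auto intro: residue_count_periods_le)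
  moreover have "(\<Sum>i<p. residue_count lo (lo + d * p) p i) = d * p"
    using assms by (simp add: sum_residue_count)
  ultimately show False by simp
qed

lemma sum_residue_count_telescope:
  assumes "mono P"
  shows "(\<Sum>s<S. residue_count (P s) (P (Suc s)) p i) = residue_count (P 0) (P S) p i"
proof (induction S)
  case (Suc S)
  have "P 0 \<le> P S" "P S \<le> P (Suc S)" using assms by (simp_all add: monoD)
  with Suc show ?case using residue_count_split[of "P 0" "P S" "P (Suc S)" p i] by simp
qed (simp add: residue_count_empty)

text \<open>The amounts \<open>c 0, c 1, \<dots>\<close> are laid out one after another on the line of natural
  numbers, which is wound around \<open>p\<close> slots; \<open>cyclic_fill c p j i\<close> is the part of \<open>c j\<close>
  that lands in slot \<open>i\<close>.\<close>

definition cyclic_fill :: "(nat \<Rightarrow> nat) \<Rightarrow> nat \<Rightarrow> nat \<Rightarrow> nat \<Rightarrow> nat" where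
  "cyclic_fill c p j i = residue_count (\<Sum>j'<j. c j') (\<Sum>j'<Suc j. c j') p i"

lemma sum_cyclic_fill_slots:
  assumes "p = 0 \<Longrightarrow> c j = 0"
  shows "(\<Sum>i<p. cyclic_fill c p j i) = c j"
  using assms by (cases "p = 0") (simp_all add: cyclic_fill_def sum_residue_count)

lemma sum_cyclic_fill_items: "(\<Sum>j<J. cyclic_fill c p j i) = residue_count 0 (\<Sum>j<J. c j) p i"
proof -
  have "mono (\<lambda>j. \<Sum>j'<j. c j')"
    by (rule monoI, rule sum_mono2) auto
  from sum_residue_count_telescope[OF this, where S = J and p = p and i = i] show ?thesis
    by (simp add: cyclic_fill_def)
qed

lemma cyclic_fill_le: "c j \<le> d * p \<Longrightarrow> cyclic_fill c p j i \<le> d"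
  by (simp add: cyclic_fill_def residue_count_le)

lemma sum_lessThan_add: "(\<Sum>i<m + n. g i) = (\<Sum>i<m. g i) + (\<Sum>i<n. g (m + i))" for m n :: nat
  by (induction n) (auto simp: add.assoc)

lemma tdet_le_sum_potentials:
  fixes A :: "nat \<Rightarrow> nat \<Rightarrow> nat" and u v :: "nat \<Rightarrow> nat"
  assumes "s \<le> t" and bound: "\<And>i j. i < s \<Longrightarrow> j < t \<Longrightarrow> A i j \<le> u i + v j"
  shows "tdet s t A \<le> (\<Sum>i<s. u i) + (\<Sum>j<t. v j)"
proof -
  let ?T = "{(\<Sum>i<s. A i (f i)) | f. inj_on f {..<s} \<and> f ` {..<s} \<subseteq> {..<t}}"
  have transversal_le: "(\<Sum>i<s. A i (f i)) \<le> (\<Sum>i<s. u i) + (\<Sum>j<t. v j)"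
    if f: "inj_on f {..<s}" "f ` {..<s} \<subseteq> {..<t}" for f
  proof -
    have "(\<Sum>i<s. A i (f i)) \<le> (\<Sum>i<s. u i + v (f i))"
      by (rule sum_mono) (use f bound in auto)
    also have "\<dots> = (\<Sum>i<s. u i) + (\<Sum>j\<in>f ` {..<s}. v j)"
      by (simp add: sum.distrib sum.reindex[OF f(1)])
    also have "(\<Sum>j\<in>f ` {..<s}. v j) \<le> (\<Sum>j<t. v j)"
      by (rule sum_mono2) (use f in auto)
    finally show ?thesis by simp
  qed
  have bounded: "?T \<subseteq> {..(\<Sum>i<s. u i) + (\<Sum>j<t. v j)}"
    using transversal_le by blast
  have "inj_on id {..<s}" "id ` {..<s} \<subseteq> {..<t}"
    using assms(1) by auto
  then have "?T \<noteq> {}" by blast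
  moreover have "transversal_sums s t A = ?T"
    unfolding transversal_sums_def using assms(1) by simp
  ultimately show ?thesis
    unfolding tdet_def using bounded finite_subset[OF bounded] by (simp add: Max_le_iff subset_eq)
qed

locale Dkl_construction =
  fixes k l n q r a b :: nat
  assumes k_le_l: "k \<le> l"
    and a_ge: "r * k \<le> a" and b_ge: "r * l \<le> b" and ab_le: "a + b \<le> n * k"
    and feasible: "k * l * n * r \<le> q * a * b + r * (a * l + b * k)"
begin

definition top_rows :: nat where "top_rows = n * k - a"

definition left_cols :: nat where "left_cols = n * l - b"

lemma rows_split: "n * k = top_rows + a"
  using ab_le by (simp add: top_rows_def)

lemma cols_split: "n * l = left_cols + b"
  using ab_le mult_le_mono2[OF k_le_l, of n] unfolding left_cols_def by linarith

definition surplus :: "nat \<Rightarrow> nat \<Rightarrow> nat" where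
  "surplus i j = (if left_cols \<le> j then cyclic_fill (\<lambda>_. r * l) b i (j - left_cols) else 0)"

definition load :: "nat \<Rightarrow> nat" where
  "load j = q * a + r * k - (\<Sum>i<top_rows. surplus i j)"

definition matrix :: "nat \<Rightarrow> nat \<Rightarrow> nat" where
  "matrix i j =
     (if i < n * k \<and> j < n * l then
        if i < top_rows then q + surplus i j else cyclic_fill load a j (i - top_rows)
      else 0)"

lemma surplus_le_1: "surplus i j \<le> 1"
  using b_ge by (simp add: surplus_def cyclic_fill_le)

lemma sum_surplus_row: "(\<Sum>j<n * l. surplus i j) = r * l"
proof -
  have "(\<Sum>j<n * l. surplus i j) = (\<Sum>j<b. cyclic_fill (\<lambda>_. r * l) b i j)"
    by (simp add: cols_split sum_lessThan_add surplus_def)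
  also have "\<dots> = r * l"
    using b_ge by (intro sum_cyclic_fill_slots) simp
  finally show ?thesis .
qed

lemma surplus_fits: "top_rows * (r * l) \<le> (q * a + r * k) * b"
proof -
  have "top_rows * (r * l) + a * (r * l) = k * l * n * r"
    using rows_split by (metis add_mult_distrib mult.commute mult.left_commute)
  then show ?thesis
    using feasible by (simp add: algebra_simps)
qed

lemma sum_surplus_column: "(\<Sum>i<top_rows. surplus i j) \<le> q * a + r * k"
proof (cases "left_cols \<le> j")
  case True
  then have "(\<Sum>i<top_rows. surplus i j) = residue_count 0 (top_rows * (r * l)) b (j - left_cols)"
    by (simp add: surplus_def sum_cyclic_fill_items)
  also have "\<dots> \<le> q * a + r * k"
    using surplus_fits by (intro residue_count_le) simp
  finally show ?thesis .
qed (simp add: surplus_def)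

lemma load_le: "load j \<le> (q + 1) * a"
  using a_ge by (simp add: load_def)

lemma sum_load: "(\<Sum>j<n * l. load j) = (q * (n * l) + r * l) * a"
proof -
  have "(\<Sum>j<n * l. load j) + (\<Sum>j<n * l. \<Sum>i<top_rows. surplus i j) = n * l * (q * a + r * k)"
    using sum_surplus_column by (simp add: load_def flip: sum.distrib)
  moreover have "(\<Sum>j<n * l. \<Sum>i<top_rows. surplus i j) = top_rows * (r * l)"
    by (simp add: sum.swap[where A = "{..<n * l}"] sum_surplus_row)
  moreover have "n * l * (q * a + r * k) = (q * (n * l) + r * l) * a + top_rows * (r * l)"
  proof -
    have "n * l * (r * k) = (a + top_rows) * (r * l)"
      using rows_split by (metis add.commute mult.commute mult.left_commute)
    then show ?thesis by (simp add: algebra_simps)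
  qed
  ultimately show ?thesis by linarith
qed

lemma matrix_row_sum:
  assumes "i < n * k"
  shows "(\<Sum>j<n * l. matrix i j) = (q * n + r) * l"
proof (cases "i < top_rows")
  case True
  then have "(\<Sum>j<n * l. matrix i j) = (\<Sum>j<n * l. q + surplus i j)"
    using assms by (simp add: matrix_def)
  also have "\<dots> = n * l * q + r * l"
    by (simp add: sum.distrib sum_surplus_row)
  finally show ?thesis by (simp add: algebra_simps)
next
  case False
  then have "(\<Sum>j<n * l. matrix i j) = residue_count 0 (0 + (q * (n * l) + r * l) * a) a (i - top_rows)"
    using assms by (simp add: matrix_def sum_cyclic_fill_items sum_load)
  also have "\<dots> = q * (n * l) + r * l"
    using False assms rows_split by (intro residue_count_periods) simp
  finally show ?thesis by (simp add: algebra_simps)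
qed

lemma matrix_column_sum:
  assumes "j < n * l"
  shows "(\<Sum>i<n * k. matrix i j) = (q * n + r) * k"
proof -
  have "(\<Sum>i<n * k. matrix i j)
      = (\<Sum>i<top_rows. q + surplus i j) + (\<Sum>i<a. cyclic_fill load a j i)"
    using assms by (simp add: rows_split sum_lessThan_add matrix_def)
  also have "(\<Sum>i<a. cyclic_fill load a j i) = load j"
    using load_le[of j] by (intro sum_cyclic_fill_slots) simp
  also have "(\<Sum>i<top_rows. q + surplus i j) + load j = top_rows * q + (q * a + r * k)"
    using sum_surplus_column[of j] by (simp add: sum.distrib load_def)
  also have "\<dots> = (top_rows + a) * q + r * k"
    by (simp add: algebra_simps)
  also have "\<dots> = (q * n + r) * k"
    unfolding rows_split[symmetric] by (simp add: algebra_simps)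
  finally show ?thesis .
qed

lemma matrix_in_Dkl: "matrix \<in> Dkl k l (q * n + r) n"
  unfolding Dkl_def using matrix_row_sum matrix_column_sum by (auto simp: matrix_def)

lemma matrix_le_potentials:
  assumes "i < n * k" "j < n * l"
  shows "matrix i j \<le> (q + (if top_rows \<le> i then 1 else 0)) + (if left_cols \<le> j then 1 else 0)"
proof (cases "i < top_rows")
  case True
  then show ?thesis
    using assms surplus_le_1[of i j] by (simp add: matrix_def surplus_def split: if_splits)
next
  case False
  have "cyclic_fill load a j (i - top_rows) \<le> q + 1"
    using load_le[of j] by (rule cyclic_fill_le)
  with False assms show ?thesis
    by (simp add: matrix_def)
qed

lemma tdet_matrix_le: "tdet (n * k) (n * l) matrix \<le> n * k * q + a + b"
proof -
  have "tdet (n * k) (n * l) matrix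
      \<le> (\<Sum>i<n * k. q + (if top_rows \<le> i then 1 else 0)) + (\<Sum>j<n * l. if left_cols \<le> j then 1 else 0)"
    using k_le_l matrix_le_potentials by (intro tdet_le_sum_potentials) simp_all
  also have "(\<Sum>i<n * k. q + (if top_rows \<le> i then 1 else 0)) = n * k * q + a"
    unfolding rows_split by (simp add: sum.distrib sum_lessThan_add)
  also have "(\<Sum>j<n * l. if left_cols \<le> j then 1 else 0) = b"
    unfolding cols_split by (simp add: sum_lessThan_add)
  finally show ?thesis by simp
qed

end

lemma exists_Dkl_tdet_le:
  fixes k l n q r a b :: nat
  assumes "k \<le> l" "r * k \<le> a" "r * l \<le> b" "a + b \<le> n * k"
    and "k * l * n * r \<le> q * a * b + r * (a * l + b * k)"
  shows "\<exists>A \<in> Dkl k l (q * n + r) n. tdet (n * k) (n * l) A \<le> n * k * q + a + b"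
proof -
  interpret Dkl_construction k l n q r a b
    using assms by unfold_locales
  show ?thesis
    using matrix_in_Dkl tdet_matrix_le by blast
qed

text \<open>Only the feasibility of \<open>(x, y)\<close> and \<open>x + y \<le> n k\<close> are needed.\<close>

theorem proposition3p2:
  fixes k l n m q r :: nat and x y :: int
  assumes "0 < k" and "k \<le> l" and "coprime k l"
    and "1 \<le> n"
    and "m = q*n + r" and "r < n"
    and feas: "x \<ge> int (r*k)" "y \<ge> int (r*l)"
       "int q * x * y + int r * (x * int l + y * int k) \<ge> int (k*l*n*r)"
    and minimal: "\<And>x' y' :: int. x' \<ge> int (r*k) \<Longrightarrow> y' \<ge> int (r*l) \<Longrightarrow>
        int q * x' * y' + int r * (x' * int l + y' * int k) \<ge> int (k*l*n*r) \<Longrightarrow> x + y \<le> x' + y'"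
    and "x + y \<le> int (n*k)"
  shows "\<exists>A \<in> Dkl k l m n. int (tdet (n*k) (n*l) A) \<le> int (n*k*q) + x + y"
proof -
  obtain a b :: nat where x: "x = int a" and y: "y = int b"
    using feas(1,2) by (metis nonneg_int_cases of_nat_0_le_iff order_trans)
  have "k * l * n * r \<le> q * a * b + r * (a * l + b * k)"
    using feas(3) unfolding x y by (metis of_nat_add of_nat_le_iff of_nat_mult)
  moreover have "r * k \<le> a" "r * l \<le> b" "a + b \<le> n * k"
    using feas(1,2) \<open>x + y \<le> int (n*k)\<close> unfolding x y
    by (simp_all flip: of_nat_mult of_nat_add)
  ultimately obtain A where "A \<in> Dkl k l m n" "tdet (n * k) (n * l) A \<le> n * k * q + a + b"
    using exists_Dkl_tdet_le[OF \<open>k \<le> l\<close>] \<open>m = q*n + r\<close> by blast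
  then show ?thesis
    unfolding x y by (metis of_nat_add of_nat_le_iff)
qed

end
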